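(* For all positive integers $d$ and $p$, (i) $\displaystyle \left|B(d,p)\cap\mathbb{P}^d_\circ\right|=\frac{1}{2}\sum_{j=1}^{d}2^j\binom{d}{j}\sum_{i=j}^{p}c_\psi(i,j)$, and (ii) $\displaystyle \kappa\!\left(B(d,p)\cap\mathbb{P}^d_\circ\right)=\frac{1}{2d}\sum_{j=1}^{d}2^j\binom{d}{j}\sum_{i=j}^{p}i\,c_\psi(i,j)$, where $c_\psi(i,j)$ is the number of primitive points of $\mathbb{Z}^j$ with all coordinates positive and $1$-norm $i$.
   Context: A point of $\mathbb{Z}^d$ is primitive if its coordinates are relatively prime; $\mathbb{P}^d_\circ$ denotes the set of primitive points of $\mathbb{Z}^d$ whose first non-zero coordinate is positive. $B(d,p)=\{x\in\mathbb{R}^d:\|x\|_1\le p\}$. For a finite $\mathcal{X}\subset\mathbb{R}^d$, $\kappa(\mathcal{X})=\max_{1\le i\le d}\sum_{x\in\mathcal{X}}|x_i|$. *)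

theory Defs
  imports "HOL-Analysis.Analysis"
begin

text \<open>Integer points of Z^d are represented as functions nat => int that vanish
  outside {..<d} (coordinates indexed 0..d-1).\<close>

definition lattice_pts :: "nat \<Rightarrow> (nat \<Rightarrow> int) set" where
  "lattice_pts d = {x. \<forall>i. i \<ge> d \<longrightarrow> x i = 0}"

definition primitive :: "nat \<Rightarrow> (nat \<Rightarrow> int) \<Rightarrow> bool" where
  "primitive d x \<longleftrightarrow> Gcd (x ` {..<d}) = 1"

definition first_nonzero_pos :: "nat \<Rightarrow> (nat \<Rightarrow> int) \<Rightarrow> bool" where
  "first_nonzero_pos d x \<longleftrightarrow> (\<exists>k<d. x k > 0 \<and> (\<forall>i<k. x i = 0))"

definition prim_circ :: "nat \<Rightarrow> (nat \<Rightarrow> int) set" where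
  "prim_circ d = {x \<in> lattice_pts d. primitive d x \<and> first_nonzero_pos d x}"

definition norm1 :: "nat \<Rightarrow> (nat \<Rightarrow> int) \<Rightarrow> int" where
  "norm1 d x = (\<Sum>i<d. \<bar>x i\<bar>)"

definition ball1 :: "nat \<Rightarrow> nat \<Rightarrow> (nat \<Rightarrow> int) set" where
  "ball1 d p = {x \<in> lattice_pts d. norm1 d x \<le> int p}"

definition kappa :: "nat \<Rightarrow> (nat \<Rightarrow> int) set \<Rightarrow> int" where
  "kappa d X = Max ((\<lambda>i. \<Sum>x\<in>X. \<bar>x i\<bar>) ` {..<d})"

definition c_psi :: "nat \<Rightarrow> nat \<Rightarrow> nat" where
  "c_psi i j = card {x \<in> lattice_pts j. primitive j x \<and> (\<forall>k<j. x k > 0) \<and> norm1 j x = int i}"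

end

(* Negation is a fixed-point-free involution on the primitive points of B(d,p), and the points
   whose first non-zero coordinate is positive form one half of each orbit; so an even function
   summed over B(d,p) \<inter> P_o^d gives half its sum over all primitive points of B(d,p).
   A primitive point with support S of size j is, after relabelling S as {0, ..., j - 1}, a sign
   vector in {-1,1}^j times a primitive point of Z^j with positive coordinates and the same
   1-norm, and there are (d choose j) such supports.  For kappa, permuting coordinates maps the
   primitive points of B(d,p) onto themselves, so all coordinate sums agree and each is 1/d of
   the total 1-norm. *)

theory Submission
  imports Defs
begin

definition prim_ball :: "nat \<Rightarrow> nat \<Rightarrow> (nat \<Rightarrow> int) set" where
  "prim_ball d p = {x \<in> ball1 d p. primitive d x}"

definition coord_support :: "nat \<Rightarrow> (nat \<Rightarrow> int) \<Rightarrow> nat set" where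
  "coord_support d x = {k. k < d \<and> x k \<noteq> 0}"

definition full_prim_ball :: "nat \<Rightarrow> nat \<Rightarrow> (nat \<Rightarrow> int) set" where
  "full_prim_ball d p = {x \<in> prim_ball d p. coord_support d x = {..<d}}"

definition pos_prim_ball :: "nat \<Rightarrow> nat \<Rightarrow> (nat \<Rightarrow> int) set" where
  "pos_prim_ball d p = {x \<in> prim_ball d p. \<forall>k<d. x k > 0}"

lemma ball1_Int_prim_circ: "ball1 d p \<inter> prim_circ d = {x \<in> prim_ball d p. first_nonzero_pos d x}"
  unfolding prim_ball_def ball1_def prim_circ_def by auto

lemma finite_ball1: "finite (ball1 d p)"
proof (rule finite_subset)
  show "ball1 d p \<subseteq> {x. \<forall>k. (k \<in> {..<d} \<longrightarrow> x k \<in> {-int p..int p}) \<and> (k \<notin> {..<d} \<longrightarrow> x k = 0)}"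
  proof (intro subsetI CollectI allI conjI impI)
    fix x k assume x: "x \<in> ball1 d p"
    { assume "k \<in> {..<d}"
      then have "\<bar>x k\<bar> \<le> norm1 d x" unfolding norm1_def by (intro member_le_sum) auto
      then show "x k \<in> {-int p..int p}" using x unfolding ball1_def by auto }
    { assume "k \<notin> {..<d}"
      then show "x k = 0" using x unfolding ball1_def lattice_pts_def by auto }
  qed
qed (intro finite_set_of_finite_funs; simp)

lemma finite_prim_ball: "finite (prim_ball d p)"
  using finite_ball1 unfolding prim_ball_def by simp

lemma Gcd_int_abs_image: "Gcd (abs ` A) = Gcd (A :: int set)"
  by (simp only: Gcd_int_def image_image o_def abs_abs)

lemma primitive_abs_iff: "primitive d (\<lambda>k. \<bar>x k\<bar>) \<longleftrightarrow> primitive d x"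
  unfolding primitive_def using Gcd_int_abs_image[of "x ` {..<d}"] by (simp add: image_image)

lemma primitive_imp_coord_support_nonempty:
  assumes "primitive d x" shows "coord_support d x \<noteq> {}"
proof
  assume "coord_support d x = {}"
  then have "x ` {..<d} \<subseteq> {0}" unfolding coord_support_def by auto
  with assms show False unfolding primitive_def by (metis Gcd_0_iff zero_neq_one)
qed

lemma primitive_reindex_iff:
  assumes f: "bij_betw f {..<j} S" and S: "S \<subseteq> {..<d}" and supp: "coord_support d x \<subseteq> S"
    and y: "\<And>k. k < j \<Longrightarrow> y k = x (f k)"
  shows "primitive j y \<longleftrightarrow> primitive d x"
proof -
  have "y ` {..<j} = x ` S"
    using y bij_betw_imp_surj_on[OF f] by (auto simp: image_comp[symmetric])
  moreover have "insert 0 (x ` {..<d}) = insert 0 (x ` S)"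
    using S supp unfolding coord_support_def by auto
  ultimately show ?thesis
    unfolding primitive_def by (metis Gcd_insert gcd_0_left normalize_Gcd)
qed

lemma norm1_reindex:
  assumes f: "bij_betw f {..<j} S" and S: "S \<subseteq> {..<d}" and supp: "coord_support d x \<subseteq> S"
    and y: "\<And>k. k < j \<Longrightarrow> y k = x (f k)"
  shows "norm1 j y = norm1 d x"
proof -
  have "norm1 d x = (\<Sum>n\<in>S. \<bar>x n\<bar>)"
    unfolding norm1_def using S supp by (intro sum.mono_neutral_right) (auto simp: coord_support_def)
  also have "\<dots> = (\<Sum>k<j. \<bar>x (f k)\<bar>)"
    by (rule sum.reindex_bij_betw[OF f, symmetric])
  finally show ?thesis unfolding norm1_def by (simp add: y)
qed

lemma prim_ball_reindex_iff:
  assumes f: "bij_betw f {..<j} S" and S: "S \<subseteq> {..<d}"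
    and x: "x \<in> lattice_pts d" "coord_support d x \<subseteq> S"
    and y: "y \<in> lattice_pts j" "\<And>k. k < j \<Longrightarrow> y k = x (f k)"
  shows "y \<in> prim_ball j p \<longleftrightarrow> x \<in> prim_ball d p"
  using x y primitive_reindex_iff[OF f S x(2) y(2)] norm1_reindex[OF f S x(2) y(2)]
  unfolding prim_ball_def ball1_def by simp

lemma prim_ball_abs_iff: "(\<lambda>k. \<bar>x k\<bar>) \<in> prim_ball d p \<longleftrightarrow> x \<in> prim_ball d p"
  unfolding prim_ball_def ball1_def lattice_pts_def norm1_def by (simp add: primitive_abs_iff)

lemma norm1_abs: "norm1 d (\<lambda>k. \<bar>x k\<bar>) = norm1 d x"
  by (simp add: norm1_def)

lemma prim_ball_uminus_iff: "- x \<in> prim_ball d p \<longleftrightarrow> x \<in> prim_ball d p"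
  using prim_ball_abs_iff[of x] prim_ball_abs_iff[of "- x"] by simp

subsection \<open>Negation\<close>

lemma first_nonzero_pos_iff:
  assumes "k < d" "x k \<noteq> 0" "\<forall>i<k. x i = 0"
  shows "first_nonzero_pos d x \<longleftrightarrow> x k > 0"
proof
  assume "first_nonzero_pos d x"
  then obtain k' where "x k' > 0" "\<forall>i<k'. x i = 0"
    unfolding first_nonzero_pos_def by auto
  moreover have "\<not> k' < k" using \<open>x k' > 0\<close> assms(3) by auto
  moreover have "\<not> k < k'" using \<open>\<forall>i<k'. x i = 0\<close> assms(2) by auto
  ultimately show "x k > 0" by (metis linorder_neqE_nat)
qed (use assms in \<open>auto simp: first_nonzero_pos_def\<close>)

lemma first_nonzero_pos_uminus_iff:
  assumes "coord_support d x \<noteq> {}"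
  shows "first_nonzero_pos d (- x) \<longleftrightarrow> \<not> first_nonzero_pos d x"
proof -
  have "\<exists>k. k < d \<and> x k \<noteq> 0" using assms unfolding coord_support_def by auto
  then obtain k where k: "k < d" "x k \<noteq> 0" "\<forall>i<k. x i = 0"
    unfolding exists_least_iff[of "\<lambda>k. k < d \<and> x k \<noteq> 0"] by auto
  have "first_nonzero_pos d (- x) \<longleftrightarrow> (- x) k > 0"
    using k by (intro first_nonzero_pos_iff) (auto simp: fun_Compl_def)
  also have "\<dots> \<longleftrightarrow> \<not> x k > 0" using k(2) by (auto simp: fun_Compl_def)
  also have "\<dots> \<longleftrightarrow> \<not> first_nonzero_pos d x" using first_nonzero_pos_iff[OF k] by simp
  finally show ?thesis .
qed

lemma sum_prim_ball_even:
  fixes h :: "(nat \<Rightarrow> int) \<Rightarrow> 'a :: comm_semiring_1"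
  assumes even: "\<And>x. h (- x) = h x"
  shows "(\<Sum>x\<in>prim_ball d p. h x) = 2 * (\<Sum>x\<in>ball1 d p \<inter> prim_circ d. h x)"
proof -
  let ?P = "{x \<in> prim_ball d p. first_nonzero_pos d x}"
  let ?N = "{x \<in> prim_ball d p. \<not> first_nonzero_pos d x}"
  have flip: "- x \<in> prim_ball d p \<and> (first_nonzero_pos d (- x) \<longleftrightarrow> \<not> first_nonzero_pos d x)"
    if "x \<in> prim_ball d p" for x
    using that prim_ball_uminus_iff first_nonzero_pos_uminus_iff primitive_imp_coord_support_nonempty
    unfolding prim_ball_def by blast
  have "(\<Sum>x\<in>?N. h x) = (\<Sum>x\<in>?P. h x)"
  proof (rule sum.reindex_bij_witness[where i = uminus and j = uminus])
    show "- (- x) = x" for x :: "nat \<Rightarrow> int" by (simp add: fun_Compl_def)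
  qed (use flip even in auto)
  moreover have "(\<Sum>x\<in>prim_ball d p. h x) = (\<Sum>x\<in>?P \<union> ?N. h x)"
    by (rule sum.cong) auto
  moreover have "\<dots> = (\<Sum>x\<in>?P. h x) + (\<Sum>x\<in>?N. h x)"
    by (rule sum.union_disjoint) (auto intro: finite_subset[OF _ finite_prim_ball])
  ultimately show ?thesis by (simp add: ball1_Int_prim_circ mult_2)
qed

subsection \<open>Counting by support and signs\<close>

lemma sum_prim_ball_coord_support:
  assumes S: "S \<subseteq> {..<d}"
  shows "(\<Sum>x\<in>{x \<in> prim_ball d p. coord_support d x = S}. g (norm1 d x))
    = (\<Sum>y\<in>full_prim_ball (card S) p. g (norm1 (card S) y))"
proof -
  define j where "j = card S"
  have "finite S" using S finite_subset by blast
  then obtain f where f: "bij_betw f {..<j} S"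
    using ex_bij_betw_nat_finite unfolding j_def atLeast0LessThan by blast
  define f' where "f' = inv_into {..<j} f"
  have f'f: "f' (f k) = k" and fS: "f k \<in> S" if "k < j" for k
    using f that unfolding f'_def bij_betw_def by auto
  have ff': "f (f' n) = n" and f'S: "f' n < j" if "n \<in> S" for n
    using f that unfolding f'_def bij_betw_def by (auto simp: f_inv_into_f inv_into_into)
  define compress where "compress x = (\<lambda>k. if k < j then x (f k) else 0)" for x :: "nat \<Rightarrow> int"
  define expand where "expand y = (\<lambda>n. if n \<in> S then y (f' n) else 0)" for y :: "nat \<Rightarrow> int"
  have compress: "compress x \<in> full_prim_ball j p \<and> norm1 j (compress x) = norm1 d x"
    if "x \<in> prim_ball d p" "coord_support d x = S" for x
  proof -
    have "x \<in> lattice_pts d" using that(1) unfolding prim_ball_def ball1_def by simp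
    moreover have "compress x \<in> lattice_pts j" unfolding compress_def lattice_pts_def by simp
    ultimately show ?thesis
      using that prim_ball_reindex_iff[OF f S] norm1_reindex[OF f S]
      unfolding full_prim_ball_def by (auto simp: coord_support_def compress_def fS)
  qed
  have expand: "expand y \<in> prim_ball d p \<and> coord_support d (expand y) = S"
    if "y \<in> full_prim_ball j p" for y
  proof -
    have y: "y \<in> lattice_pts j" "coord_support j y = {..<j}" "y \<in> prim_ball j p"
      using that unfolding full_prim_ball_def prim_ball_def ball1_def by auto
    have "coord_support d (expand y) = S"
      using y(2) S f'S unfolding coord_support_def expand_def by auto
    moreover have "expand y \<in> lattice_pts d" using S unfolding expand_def lattice_pts_def by auto
    ultimately show ?thesis
      using prim_ball_reindex_iff[OF f S, of "expand y" y] y by (simp add: expand_def fS f'f)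
  qed
  show ?thesis
  proof (rule sum.reindex_bij_witness[where i = expand and j = compress], goal_cases)
    case (1 x)
    then have "x n = 0" if "n \<notin> S" for n
      using that unfolding prim_ball_def ball1_def lattice_pts_def coord_support_def
      by (cases "n < d") auto
    then show ?case by (auto simp: expand_def compress_def f'S ff')
  next
    case (2 x)
    then show ?case using compress unfolding j_def by simp
  next
    case (3 y)
    then have "y k = 0" if "\<not> k < j" for k
      using that unfolding j_def full_prim_ball_def prim_ball_def ball1_def lattice_pts_def by auto
    then show ?case by (auto simp: expand_def compress_def fS f'f)
  next
    case (4 y)
    then show ?case using expand unfolding j_def by simp
  next
    case (5 x)
    then show ?case using compress unfolding j_def by simp
  qed
qed

lemma sum_full_prim_ball:
  fixes g :: "int \<Rightarrow> 'a :: comm_semiring_1"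
  shows "(\<Sum>y\<in>full_prim_ball j p. g (norm1 j y)) = 2 ^ j * (\<Sum>q\<in>pos_prim_ball j p. g (norm1 j q))"
proof -
  define signs where "signs = (\<Pi>\<^sub>E k\<in>{..<j}. {-1, 1 :: int})"
  define combine where
    "combine = (\<lambda>(\<sigma>, q). \<lambda>k. if k < j then \<sigma> k * q k else (0 :: int))"
  define split where "split y = (restrict (\<lambda>k. sgn (y k)) {..<j}, \<lambda>k. \<bar>y k\<bar>)"
    for y :: "nat \<Rightarrow> int"
  have sign: "\<sigma> k \<in> {-1, 1}" if "\<sigma> \<in> signs" "k < j" for \<sigma> k
    using that unfolding signs_def by auto
  have pos: "q \<in> prim_ball j p" "\<And>k. k < j \<Longrightarrow> q k > 0" "\<And>k. \<not> k < j \<Longrightarrow> q k = 0"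
    if "q \<in> pos_prim_ball j p" for q
    using that unfolding pos_prim_ball_def prim_ball_def ball1_def lattice_pts_def by auto
  have full: "y \<in> prim_ball j p" "\<And>k. k < j \<Longrightarrow> y k \<noteq> 0" "\<And>k. \<not> k < j \<Longrightarrow> y k = 0"
    if "y \<in> full_prim_ball j p" for y
    using that unfolding full_prim_ball_def prim_ball_def ball1_def lattice_pts_def coord_support_def
    by auto
  have combine_pos: "combine (\<sigma>, q) k = \<sigma> k * q k" "\<bar>combine (\<sigma>, q) k\<bar> = q k"
    "sgn (combine (\<sigma>, q) k) = \<sigma> k"
    if "\<sigma> \<in> signs" "q \<in> pos_prim_ball j p" "k < j" for \<sigma> q k
    using sign[OF that(1,3)] pos(2)[OF that(2,3)] that(3)
    by (auto simp: combine_def abs_mult sgn_mult)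
  have abs_combine: "(\<lambda>k. \<bar>combine (\<sigma>, q) k\<bar>) = q" if "\<sigma> \<in> signs" "q \<in> pos_prim_ball j p" for \<sigma> q
  proof
    fix k show "\<bar>combine (\<sigma>, q) k\<bar> = q k"
      using combine_pos(2)[OF that] pos(3)[OF that(2)] by (cases "k < j") (auto simp: combine_def)
  qed
  have "(\<Sum>y\<in>full_prim_ball j p. g (norm1 j y))
      = (\<Sum>(\<sigma>, q)\<in>signs \<times> pos_prim_ball j p. g (norm1 j q))"
  proof (rule sum.reindex_bij_witness[where i = combine and j = split], goal_cases)
    case (1 y)
    then show ?case using full(3)[OF 1] by (auto simp: fun_eq_iff combine_def split_def sgn_mult_abs)
  next
    case (2 y)
    have "restrict (\<lambda>k. sgn (y k)) {..<j} \<in> signs"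
      using full(2)[OF 2] unfolding signs_def restrict_PiE_iff by (auto simp: sgn_if)
    moreover have "(\<lambda>k. \<bar>y k\<bar>) \<in> pos_prim_ball j p"
      using full(1,2)[OF 2] prim_ball_abs_iff[of y] unfolding pos_prim_ball_def by auto
    ultimately show ?case by (simp add: split_def)
  next
    case (3 b)
    then obtain \<sigma> q where b: "b = (\<sigma>, q)" "\<sigma> \<in> signs" "q \<in> pos_prim_ball j p" by auto
    have "restrict (\<lambda>k. sgn (combine b k)) {..<j} = restrict \<sigma> {..<j}"
      using combine_pos(3)[OF b(2,3)] b(1) by (intro restrict_ext) simp
    also have "\<dots> = \<sigma>" using b(2) unfolding signs_def by simp
    finally show ?case using b abs_combine unfolding split_def by simp
  next
    case (4 b)
    then obtain \<sigma> q where b: "b = (\<sigma>, q)" "\<sigma> \<in> signs" "q \<in> pos_prim_ball j p" by auto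
    have "coord_support j (combine b) = {..<j}"
      using combine_pos(2)[OF b(2,3)] pos(2)[OF b(3)] b(1) unfolding coord_support_def by force
    moreover have "combine b \<in> prim_ball j p"
      using abs_combine[OF b(2,3)] pos(1)[OF b(3)] prim_ball_abs_iff[of "combine b"] b(1) by simp
    ultimately show ?case unfolding full_prim_ball_def by simp
  next
    case (5 y)
    then show ?case by (simp add: split_def norm1_abs)
  qed
  also have "\<dots> = of_nat (card signs) * (\<Sum>q\<in>pos_prim_ball j p. g (norm1 j q))"
    by (simp add: sum.cartesian_product[symmetric])
  also have "card signs = 2 ^ j"
    by (simp add: signs_def card_PiE numeral_2_eq_2)
  finally show ?thesis by simp
qed

lemma norm1_ge_dim:
  assumes "\<forall>k<j. x k > 0" shows "int j \<le> norm1 j x"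
proof -
  have "(\<Sum>k<j. (1::int)) \<le> (\<Sum>k<j. \<bar>x k\<bar>)"
    using assms by (intro sum_mono) auto
  then show ?thesis unfolding norm1_def by simp
qed

lemma sum_pos_prim_ball:
  fixes g :: "int \<Rightarrow> 'a :: comm_semiring_1"
  shows "(\<Sum>q\<in>pos_prim_ball j p. g (norm1 j q)) = (\<Sum>i=j..p. g (int i) * of_nat (c_psi i j))"
proof -
  have norm: "nat (norm1 j q) \<in> {j..p} \<and> int (nat (norm1 j q)) = norm1 j q"
    if "q \<in> pos_prim_ball j p" for q
    using that norm1_ge_dim[of j q] unfolding pos_prim_ball_def prim_ball_def ball1_def by auto
  have "(\<Sum>q\<in>pos_prim_ball j p. g (norm1 j q))
      = (\<Sum>i=j..p. \<Sum>q\<in>{q \<in> pos_prim_ball j p. nat (norm1 j q) = i}. g (norm1 j q))"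
  proof (rule sum.group[symmetric])
    show "finite (pos_prim_ball j p)"
      using finite_prim_ball unfolding pos_prim_ball_def by simp
  qed (use norm in auto)
  also have "\<dots> = (\<Sum>i=j..p. g (int i) * of_nat (c_psi i j))"
  proof (rule sum.cong)
    fix i assume i: "i \<in> {j..p}"
    have fiber: "{q \<in> pos_prim_ball j p. nat (norm1 j q) = i}
        = {x \<in> lattice_pts j. primitive j x \<and> (\<forall>k<j. x k > 0) \<and> norm1 j x = int i}"
    proof (intro set_eqI iffI)
      fix q assume "q \<in> {q \<in> pos_prim_ball j p. nat (norm1 j q) = i}"
      then show "q \<in> {x \<in> lattice_pts j. primitive j x \<and> (\<forall>k<j. x k > 0) \<and> norm1 j x = int i}"
        using norm[of q] unfolding pos_prim_ball_def prim_ball_def ball1_def by auto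
    next
      fix q assume "q \<in> {x \<in> lattice_pts j. primitive j x \<and> (\<forall>k<j. x k > 0) \<and> norm1 j x = int i}"
      then show "q \<in> {q \<in> pos_prim_ball j p. nat (norm1 j q) = i}"
        using i unfolding pos_prim_ball_def prim_ball_def ball1_def by auto
    qed
    have "(\<Sum>q\<in>{q \<in> pos_prim_ball j p. nat (norm1 j q) = i}. g (norm1 j q))
        = (\<Sum>q\<in>{q \<in> pos_prim_ball j p. nat (norm1 j q) = i}. g (int i))"
      using norm by (intro sum.cong) auto
    then show "(\<Sum>q\<in>{q \<in> pos_prim_ball j p. nat (norm1 j q) = i}. g (norm1 j q))
        = g (int i) * of_nat (c_psi i j)"
      unfolding c_psi_def fiber by (simp add: mult.commute)
  qed simp
  finally show ?thesis .
qed

lemma sum_Pow_card: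
  fixes f :: "nat \<Rightarrow> 'a :: comm_semiring_1"
  assumes "finite A"
  shows "(\<Sum>S\<in>Pow A. f (card S)) = (\<Sum>k\<le>card A. of_nat (card A choose k) * f k)"
proof -
  have "(\<Sum>S\<in>Pow A. f (card S)) = (\<Sum>k\<le>card A. \<Sum>S\<in>{S \<in> Pow A. card S = k}. f (card S))"
    using assms by (intro sum.group[symmetric]) (auto simp: card_mono)
  also have "\<dots> = (\<Sum>k\<le>card A. of_nat (card A choose k) * f k)"
  proof (rule sum.cong)
    fix k
    have "card {S \<in> Pow A. card S = k} = card A choose k"
      using n_subsets[OF assms] by (simp add: Pow_def)
    then show "(\<Sum>S\<in>{S \<in> Pow A. card S = k}. f (card S)) = of_nat (card A choose k) * f k"
      by simp
  qed simp
  finally show ?thesis .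
qed

lemma sum_prim_ball_norm1:
  fixes g :: "int \<Rightarrow> 'a :: comm_semiring_1"
  shows "(\<Sum>x\<in>prim_ball d p. g (norm1 d x))
    = (\<Sum>j=1..d. 2 ^ j * of_nat (d choose j) * (\<Sum>i=j..p. g (int i) * of_nat (c_psi i j)))"
proof -
  define F where "F j = (\<Sum>y\<in>full_prim_ball j p. g (norm1 j y))" for j
  have "(\<Sum>x\<in>prim_ball d p. g (norm1 d x))
      = (\<Sum>S\<in>Pow {..<d}. \<Sum>x\<in>{x \<in> prim_ball d p. coord_support d x = S}. g (norm1 d x))"
    by (intro sum.group[symmetric]) (auto simp: finite_prim_ball coord_support_def)
  also have "\<dots> = (\<Sum>S\<in>Pow {..<d}. F (card S))"
    by (intro sum.cong) (auto simp: F_def sum_prim_ball_coord_support)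
  also have "\<dots> = (\<Sum>j\<le>d. of_nat (d choose j) * F j)"
    by (simp add: sum_Pow_card)
  also have "\<dots> = (\<Sum>j=1..d. of_nat (d choose j) * F j)"
  proof -
    have "full_prim_ball 0 p = {}"
      using primitive_imp_coord_support_nonempty
      unfolding full_prim_ball_def prim_ball_def coord_support_def by auto
    then show ?thesis
      by (simp add: F_def atMost_atLeast0 sum.atLeast_Suc_atMost)
  qed
  finally show ?thesis
    by (simp add: F_def sum_full_prim_ball sum_pos_prim_ball mult_ac)
qed

subsection \<open>Coordinate symmetry\<close>

lemma prim_ball_comp_permutes:
  assumes \<pi>: "\<pi> permutes {..<d}" and x: "x \<in> prim_ball d p"
  shows "x \<circ> \<pi> \<in> prim_ball d p"
proof -
  have "\<pi> i = i" if "\<not> i < d" for i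
    by (rule permutes_not_in[OF \<pi>]) (use that in simp)
  then have "x \<circ> \<pi> \<in> lattice_pts d"
    using x unfolding prim_ball_def ball1_def lattice_pts_def by auto
  moreover have "(x \<circ> \<pi>) ` {..<d} = x ` {..<d}"
    by (simp only: image_comp[symmetric] permutes_image[OF \<pi>])
  moreover have "norm1 d (x \<circ> \<pi>) = norm1 d x"
    unfolding norm1_def o_def by (rule sum.reindex_bij_betw[OF permutes_imp_bij[OF \<pi>]])
  ultimately show ?thesis using x unfolding prim_ball_def ball1_def primitive_def by simp
qed

lemma sum_prim_ball_coord_eq:
  assumes "k < d" "l < d"
  shows "(\<Sum>x\<in>prim_ball d p. \<bar>x k\<bar>) = (\<Sum>x\<in>prim_ball d p. \<bar>x l\<bar>)"
proof -
  define \<tau> where "\<tau> = Transposition.transpose k l"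
  have \<tau>: "\<tau> permutes {..<d}"
    using assms unfolding \<tau>_def by (simp add: permutes_swap_id)
  have inv: "x \<circ> \<tau> \<circ> \<tau> = x" for x :: "nat \<Rightarrow> int"
    by (simp add: \<tau>_def comp_assoc)
  have "\<tau> l = k" by (simp add: \<tau>_def)
  then show ?thesis
    by (intro sum.reindex_bij_witness[where i = "\<lambda>x. x \<circ> \<tau>" and j = "\<lambda>x. x \<circ> \<tau>"])
      (auto simp: inv prim_ball_comp_permutes[OF \<tau>])
qed

lemma kappa_ball1_prim_circ:
  assumes "d \<ge> 1"
  shows "2 * int d * kappa d (ball1 d p \<inter> prim_circ d) = (\<Sum>x\<in>prim_ball d p. norm1 d x)"
proof -
  define c where "c = (\<Sum>x\<in>ball1 d p \<inter> prim_circ d. \<bar>x 0\<bar>)"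
  have half: "(\<Sum>x\<in>prim_ball d p. \<bar>x k\<bar>) = 2 * (\<Sum>x\<in>ball1 d p \<inter> prim_circ d. \<bar>x k\<bar>)" for k
    by (rule sum_prim_ball_even) (simp add: fun_Compl_def)
  have coord: "(\<Sum>x\<in>prim_ball d p. \<bar>x k\<bar>) = 2 * c" if "k < d" for k
    using half[of 0] sum_prim_ball_coord_eq[OF that, of 0 p] assms unfolding c_def by simp
  have "(\<Sum>x\<in>ball1 d p \<inter> prim_circ d. \<bar>x k\<bar>) = c" if "k < d" for k
    using coord[OF that] half[of k] by simp
  then have "(\<lambda>k. \<Sum>x\<in>ball1 d p \<inter> prim_circ d. \<bar>x k\<bar>) ` {..<d} = (\<lambda>_. c) ` {..<d}"
    by (intro image_cong) simp_all
  also have "\<dots> = {c}" using assms by (auto simp: image_constant_conv lessThan_empty_iff)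
  finally have "kappa d (ball1 d p \<inter> prim_circ d) = c"
    unfolding kappa_def by simp
  moreover have "(\<Sum>x\<in>prim_ball d p. norm1 d x) = (\<Sum>k<d. \<Sum>x\<in>prim_ball d p. \<bar>x k\<bar>)"
    unfolding norm1_def by (rule sum.swap)
  ultimately show ?thesis by (simp add: coord)
qed

theorem proposition2p3:
  fixes d p :: nat
  assumes "d \<ge> 1" and "p \<ge> 1"
  shows "(real (card (ball1 d p \<inter> prim_circ d)) =
           (1/2) * (\<Sum>j=1..d. 2^j * real (d choose j) * (\<Sum>i=j..p. real (c_psi i j)))) \<and>
         (real_of_int (kappa d (ball1 d p \<inter> prim_circ d)) =
           (1 / (2 * real d)) * (\<Sum>j=1..d. 2^j * real (d choose j) * (\<Sum>i=j..p. real i * real (c_psi i j))))"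
proof
  have "2 * real (card (ball1 d p \<inter> prim_circ d)) = (\<Sum>x\<in>prim_ball d p. 1)"
    using sum_prim_ball_even[of "\<lambda>_. 1 :: real" d p] by simp
  also have "\<dots> = (\<Sum>j=1..d. 2^j * real (d choose j) * (\<Sum>i=j..p. real (c_psi i j)))"
    using sum_prim_ball_norm1[of "\<lambda>_. 1 :: real" d p] by simp
  finally show "real (card (ball1 d p \<inter> prim_circ d)) =
      (1/2) * (\<Sum>j=1..d. 2^j * real (d choose j) * (\<Sum>i=j..p. real (c_psi i j)))"
    by simp
next
  have "2 * real d * real_of_int (kappa d (ball1 d p \<inter> prim_circ d))
      = (\<Sum>x\<in>prim_ball d p. real_of_int (norm1 d x))"
    using arg_cong[OF kappa_ball1_prim_circ[OF assms(1), of p], of real_of_int] by simp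
  also have "\<dots> = (\<Sum>j=1..d. 2^j * real (d choose j) * (\<Sum>i=j..p. real i * real (c_psi i j)))"
    using sum_prim_ball_norm1[of real_of_int d p] by simp
  finally show "real_of_int (kappa d (ball1 d p \<inter> prim_circ d)) =
      (1 / (2 * real d)) * (\<Sum>j=1..d. 2^j * real (d choose j) * (\<Sum>i=j..p. real i * real (c_psi i j)))"
    using assms(1) by (simp add: field_simps)
qed

end
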